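(* Let $\sigma>0$ and let $\mu_1,\dots,\mu_n,\mu_1^*,\dots,\mu_n^*\in\mathbb{R}$. Let $X_1,\dots,X_n$ be independent random variables with $X_i\sim \mathrm{Gum}(\mu_i,\sigma)$, and let $Y_1,\dots,Y_n$ be independent random variables with $Y_i\sim \mathrm{Gum}(\mu_i^*,\sigma)$, $i=1,\dots,n$. Let $X_{n:n}=\max\{X_1,\dots,X_n\}$ and $Y_{n:n}=\max\{Y_1,\dots,Y_n\}$. If $(\mu_1,\dots,\mu_n)\succeq^{m}(\mu_1^*,\dots,\mu_n^* )$, then $X_{n:n}\geq_{rh} Y_{n:n}$.
   Context: A random variable $X$ has the Gumbel distribution $\mathrm{Gum}(\mu,\sigma)$ (location $\mu\in\mathbb{R}$, scale $\sigma>0$) if its cumulative distribution function is $F(x)=e^{-e^{-(x-\mu)/\sigma}}$, $x\in\mathbb{R}$. Majorization: for $\mathbf{u},\mathbf{v}\in\mathbb{R}^n$ with components arranged in decreasing order $u_{(1)}\geq\dots\geq u_{(n)}$ and $v_{(1)}\geq\dots\geq v_{(n)}$, $\mathbf{u}\succeq^{m}\mathbf{v}$ means $\sum_{i=1}^k u_{(i)}\geq\sum_{i=1}^k v_{(i)}$ for $k=1,\dots,n-1$ and $\sum_{i=1}^n u_{(i)}=\sum_{i=1}^n v_{(i)}$. For a continuous random variable $X$ with density $f_X$ and cdf $F_X$, its reversed hazard rate is $\tilde r_X=f_X/F_X$; $X\leq_{rh}Y$ means $\tilde r_X(x)\leq\tilde r_Y(x)$ for all $x\in\mathbb{R}$,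 and $X\geq_{rh}Y$ means $Y\leq_{rh}X$. *)

theory Defs
  imports "HOL-Probability.Probability"
begin

definition gumbel_cdf :: "real \<Rightarrow> real \<Rightarrow> real \<Rightarrow> real" where
  "gumbel_cdf mu sc x = exp (- exp (- (x - mu) / sc))"

definition dec_sorted :: "real list \<Rightarrow> real list" where
  "dec_sorted xs = rev (sort xs)"

definition majorizes :: "real list \<Rightarrow> real list \<Rightarrow> bool" where
  "majorizes u v \<longleftrightarrow> length u = length v \<and>
     (\<forall>k\<in>{1..length u - 1}. sum_list (take k (dec_sorted v)) \<le> sum_list (take k (dec_sorted u))) \<and>
     sum_list u = sum_list v"

definition cdf_rv :: "'a measure \<Rightarrow> ('a \<Rightarrow> real) \<Rightarrow> real \<Rightarrow> real" where
  "cdf_rv M Z x = measure M {\<omega> \<in> space M. Z \<omega> \<le> x}"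

definition rev_hazard :: "'a measure \<Rightarrow> ('a \<Rightarrow> real) \<Rightarrow> real \<Rightarrow> real" where
  "rev_hazard M Z x = deriv (cdf_rv M Z) x / cdf_rv M Z x"

definition rh_le :: "'a measure \<Rightarrow> ('a \<Rightarrow> real) \<Rightarrow> 'b measure \<Rightarrow> ('b \<Rightarrow> real) \<Rightarrow> bool" where
  "rh_le M Z N W \<longleftrightarrow> (\<forall>x. rev_hazard M Z x \<le> rev_hazard N W x)"

end

theory Submission imports Defs begin

text \<open>
  By independence, the cdf of the maximum is the product of the Gumbel cdfs,
  \<open>exp (- exp (- x / \<sigma>) * (\<Sum>i. exp (\<mu>\<^sub>i / \<sigma>)))\<close>, whose reversed hazard rate is
  \<open>exp (- x / \<sigma>) / \<sigma> * (\<Sum>i. exp (\<mu>\<^sub>i / \<sigma>))\<close>. So the claim reduces to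
  \<open>\<Sum>i. exp (\<mu>\<^sup>*\<^sub>i / \<sigma>) \<le> \<Sum>i. exp (\<mu>\<^sub>i / \<sigma>)\<close>, which is Karamata's inequality for the
  convex function \<open>t \<mapsto> exp (t / \<sigma>)\<close>.
\<close>

lemma sum_mult_ge_of_antimono:
  fixes c d :: "nat \<Rightarrow> real"
  assumes "\<And>i. Suc i < n \<Longrightarrow> c (Suc i) \<le> c i"
    and "\<And>k. k < n \<Longrightarrow> 0 \<le> sum d {..<k}"
  shows "c (n - 1) * sum d {..<n} \<le> (\<Sum>i<n. c i * d i)"
  using assms
proof (induction n)
  case 0
  then show ?case by simp
next
  case (Suc n)
  have IH: "c (n - 1) * sum d {..<n} \<le> (\<Sum>i<n. c i * d i)"
    using Suc by simp
  have "c n \<le> c (n - 1)" if "n > 0"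
    using Suc.prems(1)[of "n - 1"] that by simp
  moreover have "0 \<le> sum d {..<n}"
    using Suc.prems(2) by simp
  ultimately have "c n * sum d {..<n} \<le> c (n - 1) * sum d {..<n}"
    by (cases "n = 0") (auto intro: mult_right_mono)
  with IH show ?case by (simp add: algebra_simps)
qed

lemma sum_list_take_eq_sum_nth:
  "k \<le> length xs \<Longrightarrow> sum_list (take k xs) = (\<Sum>i<k. xs ! i)"
  by (simp add: sum_list_sum_nth atLeast0LessThan min_def)

lemma length_dec_sorted [simp]: "length (dec_sorted xs) = length xs"
  unfolding dec_sorted_def by simp

lemma sum_list_map_dec_sorted:
  fixes f :: "real \<Rightarrow> 'b::comm_monoid_add"
  shows "sum_list (map f (dec_sorted xs)) = sum_list (map f xs)"
proof -
  have "mset (map f (dec_sorted xs)) = mset (map f xs)"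
    unfolding dec_sorted_def by simp
  then have "sum_mset (mset (map f (dec_sorted xs))) = sum_mset (mset (map f xs))"
    by (rule arg_cong)
  then show ?thesis by (simp only: sum_mset_sum_list)
qed

lemma dec_sorted_nth_Suc_le:
  "Suc i < length xs \<Longrightarrow> dec_sorted xs ! Suc i \<le> dec_sorted xs ! i"
  unfolding dec_sorted_def by (simp add: rev_nth sorted_nth_mono)

text \<open>
  With \<open>a\<close>, \<open>b\<close> the decreasingly
  sorted vectors, the tangent line at \<open>b\<^sub>i\<close> gives \<open>f a\<^sub>i - f b\<^sub>i \<ge> f' b\<^sub>i * (a\<^sub>i - b\<^sub>i)\<close>; the
  slopes \<open>f' b\<^sub>i\<close> decrease while the partial sums of \<open>a\<^sub>i - b\<^sub>i\<close> are nonnegative and total 0,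
  so Abel summation makes the right-hand sides sum to something nonnegative.
\<close>
lemma majorizes_sum_list_map_le:
  fixes f f' :: "real \<Rightarrow> real"
  assumes maj: "majorizes u v"
    and deriv: "\<And>x. (f has_real_derivative f' x) (at x)" and "mono f'"
  shows "sum_list (map f v) \<le> sum_list (map f u)"
proof -
  define a where "a = dec_sorted u"
  define b where "b = dec_sorted v"
  define n where "n = length u"
  have la: "length a = n" and lb: "length b = n"
    using maj unfolding a_def b_def n_def majorizes_def by auto
  define d where "d i = a ! i - b ! i" for i
  have partial: "sum d {..<k} = sum_list (take k a) - sum_list (take k b)" if "k \<le> n" for k
    using that la lb by (simp add: sum_list_take_eq_sum_nth d_def sum_subtractf)
  have "sum_list a = sum_list u" "sum_list b = sum_list v"
    using sum_list_map_dec_sorted[of id] unfolding a_def b_def by simp_all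
  then have total: "sum d {..<n} = 0"
    using partial[of n] la lb maj unfolding majorizes_def by simp
  have "0 \<le> sum d {..<k}" if "k < n" for k
    using partial[of k] that maj unfolding majorizes_def a_def b_def n_def
    by (cases "k = 0") auto
  moreover have "f' (b ! Suc i) \<le> f' (b ! i)" if "Suc i < n" for i
    using dec_sorted_nth_Suc_le[of i v] that lb \<open>mono f'\<close> unfolding b_def by (simp add: monoD)
  ultimately have "0 \<le> (\<Sum>i<n. f' (b ! i) * d i)"
    using sum_mult_ge_of_antimono[of n "\<lambda>i. f' (b ! i)" d] total by simp
  also have "\<dots> \<le> (\<Sum>i<n. f (a ! i) - f (b ! i))"
  proof (rule sum_mono)
    have "convex_on UNIV f"
      using deriv \<open>mono f'\<close> by (intro convex_on_realI[where f' = f']) (auto simp: monoD)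
    then show "f' (b ! i) * d i \<le> f (a ! i) - f (b ! i)" for i
      unfolding d_def using deriv[of "b ! i"] by (intro convex_on_imp_above_tangent) auto
  qed
  also have "\<dots> = sum_list (map f a) - sum_list (map f b)"
    using la lb by (simp add: sum_subtractf sum_list_sum_nth atLeast0LessThan)
  finally show ?thesis
    unfolding a_def b_def sum_list_map_dec_sorted by simp
qed

lemma (in prob_space) cdf_rv_Max_indep_vars:
  fixes X :: "'i \<Rightarrow> 'a \<Rightarrow> real"
  assumes "indep_vars (\<lambda>_. borel) X I" "finite I" "I \<noteq> {}"
  shows "cdf_rv M (\<lambda>\<omega>. Max ((\<lambda>i. X i \<omega>) ` I)) x = (\<Prod>i\<in>I. cdf_rv M (X i) x)"
proof -
  have "indep_events (\<lambda>i. {\<omega>\<in>space M. X i \<omega> \<le> x}) I"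
    by (rule indep_eventsI_indep_vars[OF assms(1)]) simp
  moreover have "{\<omega>\<in>space M. Max ((\<lambda>i. X i \<omega>) ` I) \<le> x} = (\<Inter>i\<in>I. {\<omega>\<in>space M. X i \<omega> \<le> x})"
    using assms(2,3) by auto
  ultimately show ?thesis
    unfolding cdf_rv_def using assms(2,3) unfolding indep_events_def by auto
qed

lemma rev_hazard_exp_neg:
  assumes "cdf_rv M Z = (\<lambda>x. exp (- G x))" and "(G has_real_derivative g) (at x)"
  shows "rev_hazard M Z x = - g"
proof -
  have "deriv (cdf_rv M Z) x = exp (- G x) * - g"
    unfolding assms(1) using assms(2) by (intro DERIV_imp_deriv derivative_eq_intros) auto
  then show ?thesis
    unfolding rev_hazard_def assms(1) by simp
qed

lemma gumbel_cdf_eq: "gumbel_cdf m sc x = exp (- (exp (m / sc) * exp (- x / sc)))"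
  unfolding gumbel_cdf_def by (simp add: exp_add[symmetric] diff_divide_distrib)

lemma cdf_rv_Max_gumbel:
  assumes "prob_space M" "prob_space.indep_vars M (\<lambda>_. borel) X {..<n}" "n \<ge> 1"
    and "length mu = n"
    and "\<And>i x. i < n \<Longrightarrow> cdf_rv M (X i) x = gumbel_cdf (mu ! i) sc x"
  shows "cdf_rv M (\<lambda>\<omega>. Max ((\<lambda>i. X i \<omega>) ` {..<n}))
    = (\<lambda>x. exp (- ((\<Sum>t\<leftarrow>mu. exp (t / sc)) * exp (- x / sc))))"
proof
  fix x
  have "cdf_rv M (\<lambda>\<omega>. Max ((\<lambda>i. X i \<omega>) ` {..<n})) x = (\<Prod>i<n. cdf_rv M (X i) x)"
    using prob_space.cdf_rv_Max_indep_vars[OF assms(1,2)] assms(3) by (simp add: lessThan_empty_iff)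
  also have "\<dots> = (\<Prod>i<n. gumbel_cdf (mu ! i) sc x)"
    using assms(5) by (intro prod.cong) auto
  also have "\<dots> = exp (\<Sum>i<n. - (exp (mu ! i / sc) * exp (- x / sc)))"
    by (simp add: gumbel_cdf_eq exp_sum)
  also have "\<dots> = exp (- ((\<Sum>t\<leftarrow>mu. exp (t / sc)) * exp (- x / sc)))"
    using assms(4)
    by (simp add: sum_negf sum_distrib_right sum_list_sum_nth atLeast0LessThan)
  finally show "cdf_rv M (\<lambda>\<omega>. Max ((\<lambda>i. X i \<omega>) ` {..<n})) x = \<dots>" .
qed

lemma rev_hazard_Max_gumbel:
  assumes "sc \<noteq> 0" "prob_space M" "prob_space.indep_vars M (\<lambda>_. borel) X {..<n}" "n \<ge> 1"
    and "length mu = n"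
    and "\<And>i x. i < n \<Longrightarrow> cdf_rv M (X i) x = gumbel_cdf (mu ! i) sc x"
  shows "rev_hazard M (\<lambda>\<omega>. Max ((\<lambda>i. X i \<omega>) ` {..<n})) x
    = exp (- x / sc) / sc * (\<Sum>t\<leftarrow>mu. exp (t / sc))"
  using assms(1)
  by (subst rev_hazard_exp_neg[OF cdf_rv_Max_gumbel[OF assms(2-6)]])
    (auto intro!: derivative_eq_intros)

theorem theorem3p2:
  fixes M :: "'a measure" and N :: "'b measure"
    and X :: "nat \<Rightarrow> 'a \<Rightarrow> real" and Y :: "nat \<Rightarrow> 'b \<Rightarrow> real"
    and mu mu' :: "real list" and sc :: real and n :: nat
  assumes "sc > 0"
    and "n \<ge> 1" and "length mu = n" and "length mu' = n"
    and "prob_space M" and "prob_space N"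
    and "prob_space.indep_vars M (\<lambda>_. borel) X {..<n}"
    and "prob_space.indep_vars N (\<lambda>_. borel) Y {..<n}"
    and "\<And>i x. i < n \<Longrightarrow> cdf_rv M (X i) x = gumbel_cdf (mu ! i) sc x"
    and "\<And>i x. i < n \<Longrightarrow> cdf_rv N (Y i) x = gumbel_cdf (mu' ! i) sc x"
    and "majorizes mu mu'"
  shows "rh_le N (\<lambda>\<omega>. Max ((\<lambda>i. Y i \<omega>) ` {..<n})) M (\<lambda>\<omega>. Max ((\<lambda>i. X i \<omega>) ` {..<n}))"
  unfolding rh_le_def
proof
  fix x
  have "(\<Sum>t\<leftarrow>mu'. exp (t / sc)) \<le> (\<Sum>t\<leftarrow>mu. exp (t / sc))"
  proof (rule majorizes_sum_list_map_le[OF \<open>majorizes mu mu'\<close>])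
    show "((\<lambda>t. exp (t / sc)) has_real_derivative exp (t / sc) / sc) (at t)" for t
      using \<open>sc > 0\<close> by (auto intro!: derivative_eq_intros)
    show "mono (\<lambda>t. exp (t / sc) / sc)"
      using \<open>sc > 0\<close> by (auto intro!: monoI divide_right_mono)
  qed
  moreover have "rev_hazard M (\<lambda>\<omega>. Max ((\<lambda>i. X i \<omega>) ` {..<n})) x
      = exp (- x / sc) / sc * (\<Sum>t\<leftarrow>mu. exp (t / sc))"
    using assms by (intro rev_hazard_Max_gumbel) auto
  moreover have "rev_hazard N (\<lambda>\<omega>. Max ((\<lambda>i. Y i \<omega>) ` {..<n})) x
      = exp (- x / sc) / sc * (\<Sum>t\<leftarrow>mu'. exp (t / sc))"
    using assms by (intro rev_hazard_Max_gumbel) auto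
  ultimately show "rev_hazard N (\<lambda>\<omega>. Max ((\<lambda>i. Y i \<omega>) ` {..<n})) x
      \<le> rev_hazard M (\<lambda>\<omega>. Max ((\<lambda>i. X i \<omega>) ` {..<n})) x"
    using \<open>sc > 0\<close> by (simp add: mult_left_mono divide_right_mono)
qed

end
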